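(* Let $g$ be a game on a finite graph and $a$ a player whose preference $\prec_a$ is a strict weak order. Assume that for every history $h$ and every $p\in[H_{g_h}]$, if the first player has a winning strategy in the one-vs-all threshold game $(g_h)^{a,p}$ then she has one with memory size $m$. Then for every $h\in H$ there exists a strategy $s_a$ of $a$ in $g_h$ with memory size $m$ such that $\gamma_a(h,s_a)=\Gamma_a(h)$.
   Context: A game on a finite graph $g=\langle(V,E),v_0,A,\{V_a\}_{a\in A},(\prec_a)_{a\in A}\rangle$: $(V,E)$ is a finite directed graph in which every vertex has an outgoing edge, $v_0$ the start, $\{V_a\}$ a partition of $V$ by owner, and $\prec_a\subseteq[H]\times[H]$, where $H$ is the set of finite paths from $v_0$ and $[H]$ the infinite ones. A strategy of $a$ maps each history ending in $V_a$ to a successor of its last vertex. A strategy has memory size $m$ if it is implemented by a function $\sigma:V\times\{0,1\}^m\to V\times\{0,1\}^m$: memory starts at $0^m$, after visiting vertex $v$ with memory $M$ the memory becomes $\pi_2\sigma(v,M)$, and the move at a history ending in $v$ is $\pi_1\sigma(v,M)$ with $M$ the current memory. For $h\in H$ ending in $v_1$, the future game $g_h$ is the game started at $v_1$ with preferences $v_1p\prec^h_a v_1p'$ iff $hp\prec_a hp'$ ($hp$ is $h$ continued by $v_1p$). The one-vs-all threshold game $g^{a,p}$ (for a game $g$, $a\in A$, $p$ an infinite play of $g$) is the two-player win/lose game on the same graph and start, where the first player owns $V_a$, the second owns $\bigcup_{b\neq a}V_b$, and the first player wins exactly the plays $p'$ with $p\prec_a p'$. For a strategy $s_a$ of $a$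 in $g_h$: $[H_{g_h}]$ is the set of infinite paths from $v_1$, $[H_{g_h}(s_a)]$ those consistent with $s_a$, $\gamma_a(h,s_a):=\{v_1p\in[H_{g_h}]\mid\exists v_1p'\in[H_{g_h}(s_a)],\ \neg(hp\prec_a hp')\}$ and $\Gamma_a(h):=\bigcap_{s_a}\gamma_a(h,s_a)$. A strict weak order is an irreflexive, transitive relation with $\neg(x\prec y)\wedge\neg(y\prec z)\Rightarrow\neg(x\prec z)$. *)

theory Defs
  imports Main
begin

definition fpath_from :: "('v \<times> 'v) set \<Rightarrow> 'v \<Rightarrow> 'v list \<Rightarrow> bool" where
  "fpath_from E v h \<longleftrightarrow> h \<noteq> [] \<and> hd h = v \<and> (\<forall>i. Suc i < length h \<longrightarrow> (h ! i, h ! Suc i) \<in> E)"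

definition ipath_from :: "('v \<times> 'v) set \<Rightarrow> 'v \<Rightarrow> (nat \<Rightarrow> 'v) \<Rightarrow> bool" where
  "ipath_from E v q \<longleftrightarrow> q 0 = v \<and> (\<forall>n. (q n, q (Suc n)) \<in> E)"

definition pref_upto :: "(nat \<Rightarrow> 'v) \<Rightarrow> nat \<Rightarrow> 'v list" where
  "pref_upto q n = map q [0..<Suc n]"

text \<open>hcat h q = h p where q = v1 p and v1 = last h.\<close>
definition hcat :: "'v list \<Rightarrow> (nat \<Rightarrow> 'v) \<Rightarrow> (nat \<Rightarrow> 'v)" where
  "hcat h q = (\<lambda>n. if n < length h then h ! n else q (n + 1 - length h))"

definition game :: "'v set \<Rightarrow> ('v \<times> 'v) set \<Rightarrow> 'v \<Rightarrow> 'a set \<Rightarrow> ('v \<Rightarrow> 'a)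
    \<Rightarrow> ('a \<Rightarrow> (nat \<Rightarrow> 'v) \<Rightarrow> (nat \<Rightarrow> 'v) \<Rightarrow> bool) \<Rightarrow> bool" where
  "game V E v0 A own prec \<longleftrightarrow> finite V \<and> E \<subseteq> V \<times> V \<and> v0 \<in> V
     \<and> (\<forall>v\<in>V. \<exists>w. (v, w) \<in> E) \<and> own ` V \<subseteq> A
     \<and> (\<forall>b p p'. prec b p p' \<longrightarrow> ipath_from E v0 p \<and> ipath_from E v0 p')"

definition strict_weak_order_on :: "'b set \<Rightarrow> ('b \<Rightarrow> 'b \<Rightarrow> bool) \<Rightarrow> bool" where
  "strict_weak_order_on S r \<longleftrightarrow>
     (\<forall>x\<in>S. \<not> r x x)
   \<and> (\<forall>x\<in>S. \<forall>y\<in>S. \<forall>z\<in>S. r x y \<and> r y z \<longrightarrow> r x z)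
   \<and> (\<forall>x\<in>S. \<forall>y\<in>S. \<forall>z\<in>S. \<not> r x y \<and> \<not> r y z \<longrightarrow> \<not> r x z)"

definition strategy :: "('v \<times> 'v) set \<Rightarrow> ('v \<Rightarrow> 'a) \<Rightarrow> 'a \<Rightarrow> 'v \<Rightarrow> ('v list \<Rightarrow> 'v) \<Rightarrow> bool" where
  "strategy E own a v s \<longleftrightarrow>
     (\<forall>h. fpath_from E v h \<and> own (last h) = a \<longrightarrow> (last h, s h) \<in> E)"

definition consistent :: "('v \<times> 'v) set \<Rightarrow> ('v \<Rightarrow> 'a) \<Rightarrow> 'a \<Rightarrow> 'v \<Rightarrow> ('v list \<Rightarrow> 'v) \<Rightarrow> (nat \<Rightarrow> 'v) \<Rightarrow> bool" where
  "consistent E own a v s q \<longleftrightarrow> ipath_from E v q \<and>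
     (\<forall>n. own (q n) = a \<longrightarrow> q (Suc n) = s (pref_upto q n))"

definition mem_after :: "('v \<Rightarrow> bool list \<Rightarrow> 'v \<times> bool list) \<Rightarrow> bool list \<Rightarrow> 'v list \<Rightarrow> bool list" where
  "mem_after \<sigma> M0 xs = foldl (\<lambda>M v. snd (\<sigma> v M)) M0 xs"

definition memory_size :: "('v \<times> 'v) set \<Rightarrow> ('v \<Rightarrow> 'a) \<Rightarrow> 'a \<Rightarrow> 'v \<Rightarrow> nat \<Rightarrow> ('v list \<Rightarrow> 'v) \<Rightarrow> bool" where
  "memory_size E own a v m s \<longleftrightarrow>
     (\<exists>\<sigma> :: 'v \<Rightarrow> bool list \<Rightarrow> 'v \<times> bool list.
        (\<forall>w M. length M = m \<longrightarrow> length (snd (\<sigma> w M)) = m)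
      \<and> (\<forall>h. fpath_from E v h \<and> own (last h) = a \<longrightarrow>
             s h = fst (\<sigma> (last h) (mem_after \<sigma> (replicate m False) (butlast h)))))"

text \<open>First player wins the one-vs-all threshold game (g_h)^{a,p} with strategy s.\<close>
definition wins_threshold :: "('v \<times> 'v) set \<Rightarrow> ('v \<Rightarrow> 'a) \<Rightarrow> ('a \<Rightarrow> (nat \<Rightarrow> 'v) \<Rightarrow> (nat \<Rightarrow> 'v) \<Rightarrow> bool)
    \<Rightarrow> 'a \<Rightarrow> 'v list \<Rightarrow> (nat \<Rightarrow> 'v) \<Rightarrow> ('v list \<Rightarrow> 'v) \<Rightarrow> bool" where
  "wins_threshold E own prec a h p s \<longleftrightarrow> strategy E own a (last h) s \<and>
     (\<forall>q. consistent E own a (last h) s q \<longrightarrow> prec a (hcat h p) (hcat h q))"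

definition gamma :: "('v \<times> 'v) set \<Rightarrow> ('v \<Rightarrow> 'a) \<Rightarrow> ('a \<Rightarrow> (nat \<Rightarrow> 'v) \<Rightarrow> (nat \<Rightarrow> 'v) \<Rightarrow> bool)
    \<Rightarrow> 'a \<Rightarrow> 'v list \<Rightarrow> ('v list \<Rightarrow> 'v) \<Rightarrow> (nat \<Rightarrow> 'v) set" where
  "gamma E own prec a h s = {p. ipath_from E (last h) p \<and>
     (\<exists>p'. consistent E own a (last h) s p' \<and> \<not> prec a (hcat h p) (hcat h p'))}"

definition Gamma :: "('v \<times> 'v) set \<Rightarrow> ('v \<Rightarrow> 'a) \<Rightarrow> ('a \<Rightarrow> (nat \<Rightarrow> 'v) \<Rightarrow> (nat \<Rightarrow> 'v) \<Rightarrow> bool)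
    \<Rightarrow> 'a \<Rightarrow> 'v list \<Rightarrow> (nat \<Rightarrow> 'v) set" where
  "Gamma E own prec a h = (\<Inter>s \<in> {s. strategy E own a (last h) s}. gamma E own prec a h s)"

end

theory Submission imports Defs begin

text \<open>Let W(s) be the set of thresholds p for which s wins the one-vs-all threshold game, so that
  gamma(h,s) is the complement of W(s) and Gamma(h) is the complement of the union of all W(s).
  Since the preference is a strict weak order, winning against p means winning against every
  p' that is not strictly above p; hence the sets W(s) form a chain. By hypothesis the union of
  all W(s) equals the union over strategies with memory size m, and up to their moves on
  relevant histories there are only finitely many of those. A finite chain has a greatest
  element W(s), and that s is the required strategy.\<close>

lemma fpath_from_set_subset:
  assumes "fpath_from E v h" "v \<in> V" "E \<subseteq> V \<times> V"
  shows "set h \<subseteq> V"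
proof
  fix x assume "x \<in> set h"
  then obtain i where i: "i < length h" "x = h ! i" by (auto simp: in_set_conv_nth)
  show "x \<in> V"
  proof (cases i)
    case 0 then show ?thesis using assms i by (auto simp: fpath_from_def hd_conv_nth)
  next
    case (Suc j) then have "(h ! j, h ! i) \<in> E" using assms(1) i by (auto simp: fpath_from_def)
    then show ?thesis using assms(3) i by auto
  qed
qed

lemma last_pref_upto [simp]: "last (pref_upto q n) = q n"
  by (simp add: pref_upto_def last_map)

lemma fpath_from_pref_upto:
  assumes "ipath_from E v q"
  shows "fpath_from E v (pref_upto q n)"
  using assms by (auto simp: fpath_from_def ipath_from_def pref_upto_def hd_map simp del: upt_Suc)

lemma ipath_from_hcat:
  assumes "fpath_from E v0 h" "ipath_from E (last h) p"
  shows "ipath_from E v0 (hcat h p)"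
proof -
  have h: "h \<noteq> []" "hd h = v0" "\<And>i. Suc i < length h \<Longrightarrow> (h ! i, h ! Suc i) \<in> E"
    using assms(1) by (auto simp: fpath_from_def)
  have p: "p 0 = last h" "\<And>n. (p n, p (Suc n)) \<in> E"
    using assms(2) by (auto simp: ipath_from_def)
  have "(hcat h p n, hcat h p (Suc n)) \<in> E" for n
  proof -
    consider "Suc n < length h" | "Suc n = length h" | "Suc n > length h" by linarith
    then show ?thesis
    proof cases
      case 1 then show ?thesis using h(3) by (simp add: hcat_def)
    next
      case 2
      then have "h ! n = last h" using h(1) by (metis diff_Suc_1 last_conv_nth)
      then show ?thesis using 2 p(1) p(2)[of 0] by (simp add: hcat_def)
    next
      case 3
      then have "Suc n + 1 - length h = Suc (n + 1 - length h)" by simp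
      then show ?thesis using 3 p(2)[of "n + 1 - length h"] by (simp add: hcat_def)
    qed
  qed
  moreover have "hcat h p 0 = v0" using h by (auto simp: hcat_def hd_conv_nth)
  ultimately show ?thesis by (simp add: ipath_from_def)
qed

definition strategies_agree :: "('v \<times> 'v) set \<Rightarrow> ('v \<Rightarrow> 'a) \<Rightarrow> 'a \<Rightarrow> 'v
    \<Rightarrow> ('v list \<Rightarrow> 'v) \<Rightarrow> ('v list \<Rightarrow> 'v) \<Rightarrow> bool" where
  "strategies_agree E own a v s s' \<longleftrightarrow>
     (\<forall>h. fpath_from E v h \<and> own (last h) = a \<longrightarrow> s h = s' h)"

lemma strategy_cong:
  "strategies_agree E own a v s s' \<Longrightarrow> strategy E own a v s = strategy E own a v s'"
  by (auto simp: strategies_agree_def strategy_def)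

lemma consistent_cong:
  "strategies_agree E own a v s s' \<Longrightarrow> consistent E own a v s q = consistent E own a v s' q"
  using fpath_from_pref_upto[of E v q]
  by (auto simp: strategies_agree_def consistent_def)

lemma wins_threshold_cong:
  "strategies_agree E own a (last h) s s' \<Longrightarrow>
     wins_threshold E own prec a h p s = wins_threshold E own prec a h p s'"
  by (simp add: wins_threshold_def strategy_cong consistent_cong)

definition winning_set :: "('v \<times> 'v) set \<Rightarrow> ('v \<Rightarrow> 'a) \<Rightarrow> ('a \<Rightarrow> (nat \<Rightarrow> 'v) \<Rightarrow> (nat \<Rightarrow> 'v) \<Rightarrow> bool)
    \<Rightarrow> 'a \<Rightarrow> 'v list \<Rightarrow> ('v list \<Rightarrow> 'v) \<Rightarrow> (nat \<Rightarrow> 'v) set" where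
  "winning_set E own prec a h s = {p. ipath_from E (last h) p \<and> wins_threshold E own prec a h p s}"

lemma winning_set_cong:
  "strategies_agree E own a (last h) s s' \<Longrightarrow> winning_set E own prec a h s = winning_set E own prec a h s'"
  by (simp add: winning_set_def wins_threshold_cong)

lemma gamma_eq_not_winning:
  assumes "strategy E own a (last h) s"
  shows "gamma E own prec a h s = {p. ipath_from E (last h) p} - winning_set E own prec a h s"
  using assms by (auto simp: gamma_def winning_set_def wins_threshold_def)

text \<open>Some strategy s0 is needed: over an empty family of strategies Gamma is UNIV.\<close>

lemma Gamma_eq_not_winnable:
  assumes "strategy E own a (last h) s0"
  shows "Gamma E own prec a h =
           {p. ipath_from E (last h) p} - (\<Union>s. winning_set E own prec a h s)"
  using assms by (auto simp: Gamma_def gamma_eq_not_winning) (auto simp: winning_set_def wins_threshold_def)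

lemma wins_threshold_lower:
  assumes swo: "strict_weak_order_on {p. ipath_from E v0 p} (prec a)"
    and h: "fpath_from E v0 h" and w: "wins_threshold E own prec a h p s"
    and p: "ipath_from E (last h) p" and p': "ipath_from E (last h) p'"
    and not_above: "\<not> prec a (hcat h p) (hcat h p')"
  shows "wins_threshold E own prec a h p' s"
  unfolding wins_threshold_def
proof (intro conjI allI impI)
  show "strategy E own a (last h) s" using w by (simp add: wins_threshold_def)
  fix q assume q: "consistent E own a (last h) s q"
  then have "prec a (hcat h p) (hcat h q)" using w by (simp add: wins_threshold_def)
  moreover have "ipath_from E v0 (hcat h q)"
    using q ipath_from_hcat[OF h] by (simp add: consistent_def)
  moreover have "ipath_from E v0 (hcat h p)" "ipath_from E v0 (hcat h p')"
    using ipath_from_hcat[OF h p] ipath_from_hcat[OF h p'] by auto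
  ultimately show "prec a (hcat h p') (hcat h q)"
    using swo not_above unfolding strict_weak_order_on_def by blast
qed

lemma winning_sets_chain:
  assumes swo: "strict_weak_order_on {p. ipath_from E v0 p} (prec a)"
    and h: "fpath_from E v0 h"
  shows "winning_set E own prec a h s \<subseteq> winning_set E own prec a h s'
       \<or> winning_set E own prec a h s' \<subseteq> winning_set E own prec a h s"
proof (rule ccontr)
  let ?W = "winning_set E own prec a h"
  assume "\<not> ?thesis"
  then obtain p p' where p: "p \<in> ?W s" "p \<notin> ?W s'" and p': "p' \<in> ?W s'" "p' \<notin> ?W s"
    by blast
  have ip: "ipath_from E (last h) p" "ipath_from E (last h) p'"
    using p p' by (auto simp: winning_set_def)
  have w: "wins_threshold E own prec a h p s" "wins_threshold E own prec a h p' s'"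
    using p p' by (auto simp: winning_set_def)
  have "prec a (hcat h p) (hcat h p')"
  proof (rule ccontr)
    assume "\<not> ?thesis"
    from wins_threshold_lower[OF swo h w(1) ip this] show False
      using p'(2) ip(2) by (simp add: winning_set_def)
  qed
  moreover have "prec a (hcat h p') (hcat h p)"
  proof (rule ccontr)
    assume "\<not> ?thesis"
    from wins_threshold_lower[OF swo h w(2) ip(2,1) this] show False
      using p(2) ip(1) by (simp add: winning_set_def)
  qed
  moreover have "ipath_from E v0 (hcat h p)" "ipath_from E v0 (hcat h p')"
    using ipath_from_hcat[OF h] ip by auto
  ultimately show False using swo unfolding strict_weak_order_on_def by blast
qed

definition keeps_memory_length :: "nat \<Rightarrow> ('v \<Rightarrow> bool list \<Rightarrow> 'v \<times> bool list) \<Rightarrow> bool" where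
  "keeps_memory_length m \<sigma> \<longleftrightarrow> (\<forall>w M. length M = m \<longrightarrow> length (snd (\<sigma> w M)) = m)"

definition strategy_of_memory :: "nat \<Rightarrow> ('v \<Rightarrow> bool list \<Rightarrow> 'v \<times> bool list) \<Rightarrow> 'v list \<Rightarrow> 'v" where
  "strategy_of_memory m \<sigma> h = fst (\<sigma> (last h) (mem_after \<sigma> (replicate m False) (butlast h)))"

lemma memory_size_iff_agree:
  "memory_size E own a v m s \<longleftrightarrow>
     (\<exists>\<sigma>. keeps_memory_length m \<sigma> \<and> strategies_agree E own a v s (strategy_of_memory m \<sigma>))"
  by (simp add: memory_size_def keeps_memory_length_def strategies_agree_def strategy_of_memory_def)

lemma memory_size_strategy_of_memory:
  "keeps_memory_length m \<sigma> \<Longrightarrow> memory_size E own a v m (strategy_of_memory m \<sigma>)"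
  by (auto simp: memory_size_iff_agree strategies_agree_def)

text \<open>Clamping a memory structure into the finite set of functions on V \<times> {0,1}^m does not
  change its moves on histories inside V (lemma strategies_agree_clamp), so up to agreement
  there are only finitely many strategies with memory size m.\<close>

definition clamp_memory :: "'v set \<Rightarrow> nat \<Rightarrow> 'v \<Rightarrow> ('v \<Rightarrow> bool list \<Rightarrow> 'v \<times> bool list)
    \<Rightarrow> 'v \<Rightarrow> bool list \<Rightarrow> 'v \<times> bool list" where
  "clamp_memory V m d \<sigma> w M =
     (if w \<in> V \<and> length M = m
      then (if fst (\<sigma> w M) \<in> V then fst (\<sigma> w M) else d, snd (\<sigma> w M))
      else (d, replicate m False))"

lemma keeps_memory_length_clamp:
  "keeps_memory_length m \<sigma> \<Longrightarrow> keeps_memory_length m (clamp_memory V m d \<sigma>)"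
  by (auto simp: keeps_memory_length_def clamp_memory_def)

lemma mem_after_clamp:
  assumes "keeps_memory_length m \<sigma>" "set xs \<subseteq> V" "length M = m"
  shows "mem_after (clamp_memory V m d \<sigma>) M xs = mem_after \<sigma> M xs \<and> length (mem_after \<sigma> M xs) = m"
  using assms(2,3)
proof (induction xs arbitrary: M)
  case Nil then show ?case by (simp add: mem_after_def)
next
  case (Cons x xs)
  have "snd (clamp_memory V m d \<sigma> x M) = snd (\<sigma> x M)" "length (snd (\<sigma> x M)) = m"
    using Cons.prems assms(1) by (auto simp: clamp_memory_def keeps_memory_length_def)
  then show ?case using Cons.IH[of "snd (\<sigma> x M)"] Cons.prems by (simp add: mem_after_def)
qed

lemma strategies_agree_clamp:
  assumes "strategy E own a v (strategy_of_memory m \<sigma>)" "keeps_memory_length m \<sigma>"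
    and "v \<in> V" "E \<subseteq> V \<times> V"
  shows "strategies_agree E own a v (strategy_of_memory m \<sigma>) (strategy_of_memory m (clamp_memory V m d \<sigma>))"
  unfolding strategies_agree_def
proof (intro allI impI)
  fix h assume h: "fpath_from E v h \<and> own (last h) = a"
  have "set h \<subseteq> V" "h \<noteq> []"
    using fpath_from_set_subset[of E v h V] h assms(3,4) by (auto simp: fpath_from_def)
  then have "last h \<in> V" "set (butlast h) \<subseteq> V" by (auto dest: in_set_butlastD)
  moreover have "strategy_of_memory m \<sigma> h \<in> V"
    using assms(1,4) h by (auto simp: strategy_def)
  ultimately show "strategy_of_memory m \<sigma> h = strategy_of_memory m (clamp_memory V m d \<sigma>) h"
    using mem_after_clamp[OF assms(2), of "butlast h" V "replicate m False" d]
    by (simp add: strategy_of_memory_def clamp_memory_def)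
qed

lemma finite_clamp_memory:
  fixes V :: "'v set"
  assumes "finite V" "d \<in> V"
  shows "finite (clamp_memory V m d ` {\<sigma>. keeps_memory_length m \<sigma>})"
proof -
  let ?D = "V \<times> {M :: bool list. length M = m}"
  let ?S = "{f. \<forall>x. (x \<in> ?D \<longrightarrow> f x \<in> ?D) \<and> (x \<notin> ?D \<longrightarrow> f x = (d, replicate m False))}"
  have "finite {M :: bool list. length M = m}"
    using finite_lists_length_eq[of "UNIV :: bool set" m] by simp
  with assms(1) have "finite ?D" by (rule finite_cartesian_product)
  then have "finite ?S" using finite_set_of_finite_funs[of ?D ?D] by simp
  moreover have "clamp_memory V m d ` {\<sigma>. keeps_memory_length m \<sigma>} \<subseteq> curry ` ?S"
  proof clarify
    fix \<sigma> :: "'v \<Rightarrow> bool list \<Rightarrow> 'v \<times> bool list" assume "keeps_memory_length m \<sigma>"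
    then have "case_prod (clamp_memory V m d \<sigma>) \<in> ?S"
      using assms(2) by (auto simp: clamp_memory_def keeps_memory_length_def)
    moreover have "clamp_memory V m d \<sigma> = curry (case_prod (clamp_memory V m d \<sigma>))" by simp
    ultimately show "clamp_memory V m d \<sigma> \<in> curry ` ?S" by blast
  qed
  ultimately show ?thesis by (rule finite_surj)
qed

lemma finite_memory_strategies_up_to_agreement:
  assumes "finite V" "v \<in> V" "E \<subseteq> V \<times> V"
  obtains F where "finite F" "\<And>\<sigma>. \<sigma> \<in> F \<Longrightarrow> keeps_memory_length m \<sigma>"
    and "\<And>s. strategy E own a v s \<Longrightarrow> memory_size E own a v m s \<Longrightarrow>
           \<exists>\<sigma>\<in>F. strategies_agree E own a v s (strategy_of_memory m \<sigma>)"
proof -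
  let ?F = "clamp_memory V m v ` {\<sigma>. keeps_memory_length m \<sigma>}"
  have "\<exists>\<sigma>\<in>?F. strategies_agree E own a v s (strategy_of_memory m \<sigma>)"
    if s: "strategy E own a v s" "memory_size E own a v m s" for s
  proof -
    obtain \<sigma> where \<sigma>: "keeps_memory_length m \<sigma>"
      and agree: "strategies_agree E own a v s (strategy_of_memory m \<sigma>)"
      using s(2) by (auto simp: memory_size_iff_agree)
    have "strategy E own a v (strategy_of_memory m \<sigma>)"
      using s(1) strategy_cong[OF agree] by simp
    from strategies_agree_clamp[OF this \<sigma> assms(2,3)] agree
    have "strategies_agree E own a v s (strategy_of_memory m (clamp_memory V m v \<sigma>))"
      by (simp add: strategies_agree_def)
    then show ?thesis using \<sigma> by blast
  qed
  moreover have "finite ?F" using finite_clamp_memory[OF assms(1,2)] .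
  moreover have "keeps_memory_length m \<sigma>" if "\<sigma> \<in> ?F" for \<sigma>
    using that keeps_memory_length_clamp by auto
  ultimately show thesis using that by blast
qed

lemma exists_memoryless_strategy:
  assumes "v \<in> V" "E \<subseteq> V \<times> V" "\<forall>w\<in>V. \<exists>w'. (w, w') \<in> E"
  shows "\<exists>s. strategy E own a v s \<and> memory_size E own a v m s"
proof -
  define \<sigma> where "\<sigma> w M = (SOME w'. (w, w') \<in> E, M)" for w and M :: "bool list"
  have "strategy E own a v (strategy_of_memory m \<sigma>)"
    unfolding strategy_def
  proof (intro allI impI)
    fix h assume h: "fpath_from E v h \<and> own (last h) = a"
    have "set h \<subseteq> V" "h \<noteq> []"
      using fpath_from_set_subset[of E v h V] h assms(1,2) by (auto simp: fpath_from_def)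
    then have "last h \<in> V" by auto
    then have "\<exists>w'. (last h, w') \<in> E" using assms(3) by blast
    then show "(last h, strategy_of_memory m \<sigma> h) \<in> E"
      unfolding strategy_of_memory_def \<sigma>_def by (simp add: someI_ex[of "\<lambda>w'. (last h, w') \<in> E"])
  qed
  moreover have "memory_size E own a v m (strategy_of_memory m \<sigma>)"
    by (rule memory_size_strategy_of_memory) (simp add: keeps_memory_length_def \<sigma>_def)
  ultimately show ?thesis by blast
qed

lemma exists_greatest_winning_set:
  assumes game: "game V E v0 A own prec"
    and swo: "strict_weak_order_on {p. ipath_from E v0 p} (prec a)"
    and h: "fpath_from E v0 h"
  obtains s where "strategy E own a (last h) s" "memory_size E own a (last h) m s"
    and "\<And>s'. strategy E own a (last h) s' \<Longrightarrow> memory_size E own a (last h) m s' \<Longrightarrow>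
           winning_set E own prec a h s' \<subseteq> winning_set E own prec a h s"
proof -
  let ?v = "last h" and ?W = "winning_set E own prec a h"
  have G: "finite V" "E \<subseteq> V \<times> V" "v0 \<in> V" "\<forall>v\<in>V. \<exists>w. (v, w) \<in> E"
    using game by (auto simp: game_def)
  have "h \<noteq> []" using h by (simp add: fpath_from_def)
  then have v: "?v \<in> V" using fpath_from_set_subset[OF h G(3,2)] by auto
  obtain F where F: "finite F" "\<And>\<sigma>. \<sigma> \<in> F \<Longrightarrow> keeps_memory_length m \<sigma>"
    and cover: "\<And>s. strategy E own a ?v s \<Longrightarrow> memory_size E own a ?v m s \<Longrightarrow>
           \<exists>\<sigma>\<in>F. strategies_agree E own a ?v s (strategy_of_memory m \<sigma>)"
    using finite_memory_strategies_up_to_agreement[OF G(1) v G(2)] by metis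
  define S where "S = {s \<in> strategy_of_memory m ` F. strategy E own a ?v s}"
  have covered: "\<exists>s'\<in>S. ?W s = ?W s'"
    if s: "strategy E own a ?v s" "memory_size E own a ?v m s" for s
  proof -
    obtain \<sigma> where "\<sigma> \<in> F" and agree: "strategies_agree E own a ?v s (strategy_of_memory m \<sigma>)"
      using cover[OF s] by blast
    moreover have "strategy E own a ?v (strategy_of_memory m \<sigma>)"
      using s(1) strategy_cong[OF agree] by simp
    ultimately show ?thesis using winning_set_cong[OF agree] unfolding S_def by blast
  qed
  obtain s0 where "strategy E own a ?v s0" "memory_size E own a ?v m s0"
    using exists_memoryless_strategy[OF v G(2,4), of own a m] by blast
  then have "S \<noteq> {}" using covered by blast
  moreover have "finite S" using F(1) unfolding S_def by simp
  moreover have "subset.chain UNIV (?W ` S)"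
    using winning_sets_chain[where prec = prec and a = a, OF swo h] by (auto simp: subset_chain_def)
  ultimately have "\<Union>(?W ` S) \<in> ?W ` S" by (intro Union_in_chain) auto
  then obtain s where s: "s \<in> S" "?W s = \<Union>(?W ` S)" by auto
  show thesis
  proof
    obtain \<sigma> where "\<sigma> \<in> F" "s = strategy_of_memory m \<sigma>" "strategy E own a ?v s"
      using s(1) unfolding S_def by blast
    then show "strategy E own a ?v s" "memory_size E own a ?v m s"
      using F(2) memory_size_strategy_of_memory[of m \<sigma> E own a ?v] by auto
    fix s' assume "strategy E own a ?v s'" "memory_size E own a ?v m s'"
    then obtain s'' where "s'' \<in> S" "?W s' = ?W s''" using covered by blast
    then show "?W s' \<subseteq> ?W s" using s(2) by auto
  qed
qed

theorem lemma37:
  fixes V :: "'v set" and E :: "('v \<times> 'v) set" and v0 :: 'v and A :: "'a set"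
    and own :: "'v \<Rightarrow> 'a" and prec :: "'a \<Rightarrow> (nat \<Rightarrow> 'v) \<Rightarrow> (nat \<Rightarrow> 'v) \<Rightarrow> bool"
    and a :: 'a and m :: nat
  assumes "game V E v0 A own prec"
    and "a \<in> A"
    and "strict_weak_order_on {p. ipath_from E v0 p} (prec a)"
    and "\<forall>h p. fpath_from E v0 h \<and> ipath_from E (last h) p \<longrightarrow>
           (\<exists>s. wins_threshold E own prec a h p s) \<longrightarrow>
           (\<exists>s. wins_threshold E own prec a h p s \<and> memory_size E own a (last h) m s)"
  shows "\<forall>h. fpath_from E v0 h \<longrightarrow>
           (\<exists>s. strategy E own a (last h) s \<and> memory_size E own a (last h) m s
                \<and> gamma E own prec a h s = Gamma E own prec a h)"
proof (intro allI impI)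
  fix h assume h: "fpath_from E v0 h"
  let ?W = "winning_set E own prec a h"
  obtain s where s: "strategy E own a (last h) s" "memory_size E own a (last h) m s"
    and greatest: "\<And>s'. strategy E own a (last h) s' \<Longrightarrow> memory_size E own a (last h) m s' \<Longrightarrow>
           ?W s' \<subseteq> ?W s"
    using exists_greatest_winning_set[OF assms(1,3) h] by metis
  have "(\<Union>s'. ?W s') \<subseteq> ?W s"
  proof
    fix p assume "p \<in> (\<Union>s'. ?W s')"
    then obtain s' where "ipath_from E (last h) p" "wins_threshold E own prec a h p s'"
      by (auto simp: winning_set_def)
    then obtain s'' where "wins_threshold E own prec a h p s''" "memory_size E own a (last h) m s''"
      and "p \<in> ?W s''"
      using assms(4) h by (auto simp: winning_set_def)
    then show "p \<in> ?W s" using greatest by (auto simp: wins_threshold_def)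
  qed
  then have "gamma E own prec a h s = Gamma E own prec a h"
    using s(1) by (auto simp: gamma_eq_not_winning Gamma_eq_not_winnable)
  then show "\<exists>s. strategy E own a (last h) s \<and> memory_size E own a (last h) m s
                \<and> gamma E own prec a h s = Gamma E own prec a h"
    using s by blast
qed

end
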